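(* Let $k<\omega$, $\bar S=\langle S_m:m\le k\rangle$ and $\Lambda\subseteq\prod_{m\le k}{}^\omega(S_m)$. Assume there is a family $\langle\alpha_{\bar\eta,m,n}:\bar\eta\in\Lambda,m\le k,n<\omega\rangle$ of ordinals below $2^{\aleph_0}$ such that for every function $h:\Lambda_{\le k}\to 2^{\aleph_0}$ there is $\bar\eta\in\Lambda$ with $h(\bar\eta\upharpoonleft\langle m,n\rangle)=\alpha_{\bar\eta,m,n}$ for all $m\le k$, $n<\omega$. Then there is $\mathbf a:\Lambda\times\omega\to\mathbb Z$ such that, writing $G=G_{(k,\bar S,\Lambda,\mathbf a)}$, every homomorphism $h:G\to\mathbb Z$ satisfies $h(z)=0$.
   Context: For a set $X$, ${}^\omega X$ is the set of functions $\omega\to X$; $\Lambda$ consists of sequences $\bar\eta=\langle\eta_0,\dots,\eta_k\rangle$ with $\eta_m\in{}^\omega(S_m)$. For $\bar\eta\in\Lambda$, $m\le k$, $n<\omega$, $\bar\eta\upharpoonleft\langle m,n\rangle$ is the sequence obtained from $\bar\eta$ by replacing $\eta_m$ with $\eta_m\restriction n$. $\Lambda_m=\{\bar\eta\upharpoonleft\langle m,n\rangle:\bar\eta\in\Lambda,n<\omega\}$, $\Lambda_{\le k}=\bigcup_{m\le k}\Lambda_m$. Given $\mathbf a:\Lambda\times\omega\to\mathbb Z$ (write $\mathbf a_{\bar\eta,n}$), $G_{(k,\bar S,\Lambda,\mathbf a)}$ is the abelian group generated by $z$, $x_{\bar\nu}$ ($\bar\nu\in\Lambda_{\le k}$) and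 $y_{\bar\eta,n}$ ($\bar\eta\in\Lambda,n<\omega$) freely except for the relations $(n!)y_{\bar\eta,n+1}=y_{\bar\eta,n}+\mathbf a_{\bar\eta,n}z+\sum_{m\le k}x_{\bar\eta\upharpoonleft\langle m,n\rangle}$ ($\bar\eta\in\Lambda$, $n<\omega$). *)

theory Defs
  imports "HOL-Algebra.Algebra" "HOL-Algebra.Free_Abelian_Groups"
begin

definition seq_prod :: "nat \<Rightarrow> (nat \<Rightarrow> 'a set) \<Rightarrow> (nat \<Rightarrow> 'a) list set" where
  "seq_prod k S = {\<eta>. length \<eta> = Suc k \<and> (\<forall>m\<le>k. \<forall>i. (\<eta> ! m) i \<in> S m)}"

text \<open>It is represented as the triple (m, n, modified list), the first two components
  recording which entry is the finite sequence and its length.\<close>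

definition restr :: "(nat \<Rightarrow> 'a) list \<Rightarrow> nat \<Rightarrow> nat \<Rightarrow> nat \<times> nat \<times> (nat \<Rightarrow> 'a) list" where
  "restr \<eta> m n = (m, n, \<eta>[m := (\<lambda>i. if i < n then (\<eta> ! m) i else undefined)])"

definition Lambda_le :: "nat \<Rightarrow> (nat \<Rightarrow> 'a) list set \<Rightarrow> (nat \<times> nat \<times> (nat \<Rightarrow> 'a) list) set" where
  "Lambda_le k \<Lambda> = {restr \<eta> m n | \<eta> m n. \<eta> \<in> \<Lambda> \<and> m \<le> k}"

datatype 'a gen = GZ | GX "nat \<times> nat \<times> (nat \<Rightarrow> 'a) list" | GY "(nat \<Rightarrow> 'a) list" nat

definition gens :: "nat \<Rightarrow> (nat \<Rightarrow> 'a) list set \<Rightarrow> 'a gen set" where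
  "gens k \<Lambda> = {GZ} \<union> GX ` Lambda_le k \<Lambda> \<union> {GY \<eta> n | \<eta> n. \<eta> \<in> \<Lambda>}"

definition free_G :: "nat \<Rightarrow> (nat \<Rightarrow> 'a) list set \<Rightarrow> ('a gen \<Rightarrow>\<^sub>0 int) monoid" where
  "free_G k \<Lambda> = free_Abelian_group (gens k \<Lambda>)"

definition relator :: "nat \<Rightarrow> ((nat \<Rightarrow> 'a) list \<Rightarrow> nat \<Rightarrow> int) \<Rightarrow> (nat \<Rightarrow> 'a) list \<Rightarrow> nat \<Rightarrow> 'a gen \<Rightarrow>\<^sub>0 int" where
  "relator k a \<eta> n =
     frag_cmul (int (fact n)) (frag_of (GY \<eta> (Suc n))) - frag_of (GY \<eta> n)
     - frag_cmul (a \<eta> n) (frag_of GZ) - (\<Sum>m\<le>k. frag_of (GX (restr \<eta> m n)))"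

definition rel_subgroup :: "nat \<Rightarrow> (nat \<Rightarrow> 'a) list set \<Rightarrow> ((nat \<Rightarrow> 'a) list \<Rightarrow> nat \<Rightarrow> int) \<Rightarrow> ('a gen \<Rightarrow>\<^sub>0 int) set" where
  "rel_subgroup k \<Lambda> a = generate (free_G k \<Lambda>) {relator k a \<eta> n | \<eta> n. \<eta> \<in> \<Lambda>}"

text \<open>The group \<open>G_{(k,S,\<Lambda>,a)}\<close> as a quotient of the free abelian group
  (S only enters through the requirement that \<open>\<Lambda>\<close> lies in the product).\<close>
definition G_grp :: "nat \<Rightarrow> (nat \<Rightarrow> 'a) list set \<Rightarrow> ((nat \<Rightarrow> 'a) list \<Rightarrow> nat \<Rightarrow> int)
    \<Rightarrow> ('a gen \<Rightarrow>\<^sub>0 int) set monoid" where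
  "G_grp k \<Lambda> a = free_G k \<Lambda> Mod rel_subgroup k \<Lambda> a"

definition G_z :: "nat \<Rightarrow> (nat \<Rightarrow> 'a) list set \<Rightarrow> ((nat \<Rightarrow> 'a) list \<Rightarrow> nat \<Rightarrow> int) \<Rightarrow> ('a gen \<Rightarrow>\<^sub>0 int) set" where
  "G_z k \<Lambda> a = rel_subgroup k \<Lambda> a #>\<^bsub>free_G k \<Lambda>\<^esub> frag_of GZ"

end

theory Submission
  imports Defs
begin

(* Given h : G \<rightarrow> \<int>, let f be h composed with the quotient map, a homomorphism on the free group.
   Since a is read off \<alpha>, the guessing hypothesis provides \<eta> \<in> \<Lambda> at which a was chosen knowing
   t = f(z) and c_n = \<Sum>_m f(x_{\<eta>\<upharpoonleft><m,n>}), whose pairs \<alpha> codes: a_{\<eta>,n} = 1 - c_n div t makes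
   d_n = a_{\<eta>,n} t + c_n = (c_n mod t) + t nonzero with |d_n| \<le> 2|t| whenever t \<noteq> 0.
   The relations then say that y_n = f(y_{\<eta>,n}) satisfies n! y_{n+1} = y_n + d_n, which has no
   integer solution: y_n stays bounded, so y_{n+1} = 0 as soon as n! beats the bound, and then d_{n+1} = 0. *)

lemma fact_recurrence_no_int_solution:
  fixes y d :: "nat \<Rightarrow> int" and T :: int
  assumes d_nonzero: "\<And>n. d n \<noteq> 0" and d_bounded: "\<And>n. \<bar>d n\<bar> \<le> T"
    and recurrence: "\<And>n. fact n * y (Suc n) = y n + d n"
  shows False
proof -
  define M where "M = max \<bar>y 2\<bar> T"
  have bounded: "\<bar>y n\<bar> \<le> M" if "n \<ge> 2" for n
    using that
  proof (induction n rule: dec_induct)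
    case base
    then show ?case by (simp add: M_def)
  next
    case (step n)
    have "(2 :: int) \<le> fact n"
      using fact_mono[OF step(1)] by simp
    then have "2 * \<bar>y (Suc n)\<bar> \<le> \<bar>fact n * y (Suc n)\<bar>"
      by (simp add: abs_mult mult_right_mono)
    also have "\<dots> \<le> M + T"
      using recurrence[of n] d_bounded[of n] step(3) by (simp add: abs_le_iff)
    finally show ?case
      by (simp add: M_def)
  qed
  have vanishing: "y (Suc n) = 0" if "n \<ge> 2" "M + T < fact n" for n
  proof (rule ccontr)
    assume "y (Suc n) \<noteq> 0"
    then have "fact n \<le> \<bar>fact n * y (Suc n)\<bar>"
      by (simp add: abs_mult)
    also have "\<dots> \<le> M + T"
      using recurrence[of n] d_bounded[of n] bounded[OF that(1)] by (simp add: abs_le_iff)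
    finally show False
      using that(2) by simp
  qed
  define n where "n = nat (M + T) + 2"
  have "M + T < int n"
    by (simp add: n_def)
  also have "int n \<le> fact n"
    by (metis fact_ge_self of_nat_fact of_nat_le_iff)
  finally have "M + T < fact n" .
  moreover have "(fact n :: int) \<le> fact (Suc n)"
    by (rule fact_mono) simp
  ultimately have "y (Suc n) = 0" "y (Suc (Suc n)) = 0"
    by (simp_all add: vanishing n_def)
  then show False
    using recurrence[of "Suc n"] d_nonzero[of "Suc n"] by simp
qed

lemma mod_plus_divisor_nonzero_bounded:
  fixes c t :: int
  assumes "t \<noteq> 0"
  shows "c mod t + t \<noteq> 0" and "\<bar>c mod t + t\<bar> \<le> 2 * \<bar>t\<bar>"
proof -
  have "0 \<le> c mod t \<and> c mod t < t \<or> t < c mod t \<and> c mod t \<le> 0"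
    using assms pos_mod_sign pos_mod_bound neg_mod_sign neg_mod_bound
    by (metis linorder_neqE_linordered_idom)
  then show "c mod t + t \<noteq> 0" and "\<bar>c mod t + t\<bar> \<le> 2 * \<bar>t\<bar>"
    by auto
qed

lemma keys_diff_subsetI:
  "Poly_Mapping.keys x \<subseteq> S \<Longrightarrow> Poly_Mapping.keys y \<subseteq> S \<Longrightarrow> Poly_Mapping.keys (x - y) \<subseteq> S"
  using keys_diff[of x y] by blast

lemma keys_cmul_subsetI: "Poly_Mapping.keys x \<subseteq> S \<Longrightarrow> Poly_Mapping.keys (frag_cmul c x) \<subseteq> S"
  using keys_cmul[of c x] by blast

lemma hom_free_Abelian_group_integer_diff:
  assumes "f \<in> hom (free_Abelian_group S) integer_group"
    and "Poly_Mapping.keys x \<subseteq> S" "Poly_Mapping.keys y \<subseteq> S"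
  shows "f (x - y) = f x - f y"
proof -
  interpret group_hom "free_Abelian_group S" integer_group f
    using assms(1) by (simp add: group_hom_def group_hom_axioms_def)
  have "f (x - y) = f (x \<otimes>\<^bsub>free_Abelian_group S\<^esub> inv\<^bsub>free_Abelian_group S\<^esub> y)"
    using assms(3) by simp
  also have "\<dots> = f x - f y"
    using assms(2,3) hom_mult[of x "inv\<^bsub>free_Abelian_group S\<^esub> y"] hom_inv[of y] by simp
  finally show ?thesis .
qed

lemma hom_free_Abelian_group_integer_cmul:
  assumes "f \<in> hom (free_Abelian_group S) integer_group" "Poly_Mapping.keys x \<subseteq> S"
  shows "f (frag_cmul c x) = c * f x"
proof -
  interpret group_hom "free_Abelian_group S" integer_group f
    using assms(1) by (simp add: group_hom_def group_hom_axioms_def)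
  show ?thesis
    using hom_int_pow[of x c] assms(2) by simp
qed

lemma hom_free_Abelian_group_integer_sum:
  assumes "f \<in> hom (free_Abelian_group S) integer_group"
    and "\<And>i. i \<in> I \<Longrightarrow> Poly_Mapping.keys (g i) \<subseteq> S"
  shows "f (sum g I) = (\<Sum>i\<in>I. f (g i))"
  using assms(2)
proof (induction I rule: infinite_finite_induct)
  case (insert i I)
  have "sum g I \<in> carrier (free_Abelian_group S)"
    using insert.prems by (intro sum_closed_free_Abelian_group) simp
  then show ?case
    using insert hom_mult[OF assms(1), of "g i" "sum g I"] by simp
qed (use hom_one[OF assms(1)] in simp_all)

lemma (in comm_group) hom_Mod_generate_pullback:
  assumes "R \<subseteq> carrier G" "group H" "h \<in> hom (G Mod generate G R) H"
  shows "(\<lambda>x. h (generate G R #> x)) \<in> hom G H"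
    and "\<And>r. r \<in> R \<Longrightarrow> h (generate G R #> r) = \<one>\<^bsub>H\<^esub>"
proof -
  have normal: "generate G R \<lhd> G"
    using assms(1) by (intro subgroup_imp_normal generate_is_subgroup)
  show "(\<lambda>x. h (generate G R #> x)) \<in> hom G H"
    using Group.hom_compose[OF normal.r_coset_hom_Mod[OF normal] assms(3)] by (simp add: comp_def)
  fix r assume "r \<in> R"
  then have "generate G R #> r = \<one>\<^bsub>G Mod generate G R\<^esub>"
    using assms(1) by (simp add: coset_join2 generate.incl generate_is_subgroup subsetD)
  then show "h (generate G R #> r) = \<one>\<^bsub>H\<^esub>"
    using hom_one[OF assms(3) normal.factorgroup_is_group[OF normal] assms(2)] by simp
qed

lemma GZ_in_gens [simp]: "GZ \<in> gens k \<Lambda>"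
  by (simp add: gens_def)

lemma GY_in_gens [simp]: "\<eta> \<in> \<Lambda> \<Longrightarrow> GY \<eta> n \<in> gens k \<Lambda>"
  by (simp add: gens_def)

lemma GX_restr_in_gens [simp]: "\<eta> \<in> \<Lambda> \<Longrightarrow> m \<le> k \<Longrightarrow> GX (restr \<eta> m n) \<in> gens k \<Lambda>"
  by (auto simp: gens_def Lambda_le_def)

lemma keys_sum_GX_restr_subset_gens:
  "\<eta> \<in> \<Lambda> \<Longrightarrow> Poly_Mapping.keys (\<Sum>m\<le>k. frag_of (GX (restr \<eta> m n))) \<subseteq> gens k \<Lambda>"
  using sum_closed_free_Abelian_group[of "{..k}" "\<lambda>m. frag_of (GX (restr \<eta> m n))" "gens k \<Lambda>"]
  by simp

lemma relator_in_carrier: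
  "\<eta> \<in> \<Lambda> \<Longrightarrow> relator k a \<eta> n \<in> carrier (free_G k \<Lambda>)"
  by (simp add: relator_def free_G_def keys_diff_subsetI keys_cmul_subsetI keys_sum_GX_restr_subset_gens)

lemma hom_relator:
  assumes f: "f \<in> hom (free_G k \<Lambda>) integer_group" and "\<eta> \<in> \<Lambda>"
  shows "f (relator k a \<eta> n) = fact n * f (frag_of (GY \<eta> (Suc n))) - f (frag_of (GY \<eta> n))
           - a \<eta> n * f (frag_of GZ) - (\<Sum>m\<le>k. f (frag_of (GX (restr \<eta> m n))))"
proof -
  have f': "f \<in> hom (free_Abelian_group (gens k \<Lambda>)) integer_group"
    using f by (simp add: free_G_def)
  have "f (\<Sum>m\<le>k. frag_of (GX (restr \<eta> m n))) = (\<Sum>m\<le>k. f (frag_of (GX (restr \<eta> m n))))"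
    using assms(2) by (intro hom_free_Abelian_group_integer_sum[OF f']) simp
  with assms(2) show ?thesis
    by (simp add: relator_def keys_diff_subsetI keys_cmul_subsetI keys_sum_GX_restr_subset_gens
        hom_free_Abelian_group_integer_diff[OF f'] hom_free_Abelian_group_integer_cmul[OF f'])
qed

lemma hom_G_grp_pullback:
  assumes h: "h \<in> hom (G_grp k \<Lambda> a) integer_group"
  shows "(\<lambda>x. h (rel_subgroup k \<Lambda> a #>\<^bsub>free_G k \<Lambda>\<^esub> x)) \<in> hom (free_G k \<Lambda>) integer_group"
    and "\<eta> \<in> \<Lambda> \<Longrightarrow> h (rel_subgroup k \<Lambda> a #>\<^bsub>free_G k \<Lambda>\<^esub> relator k a \<eta> n) = 0"
proof -
  define R where "R = {relator k a \<eta> n | \<eta> n. \<eta> \<in> \<Lambda>}"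
  interpret comm_group "free_G k \<Lambda>"
    unfolding free_G_def by (rule abelian_free_Abelian_group)
  have R: "R \<subseteq> carrier (free_G k \<Lambda>)"
    by (auto simp: R_def relator_in_carrier)
  have "h \<in> hom (free_G k \<Lambda> Mod generate (free_G k \<Lambda>) R) integer_group"
    using h by (simp add: G_grp_def rel_subgroup_def R_def)
  note pullback = hom_Mod_generate_pullback[OF R group_integer_group this]
  show "(\<lambda>x. h (rel_subgroup k \<Lambda> a #>\<^bsub>free_G k \<Lambda>\<^esub> x)) \<in> hom (free_G k \<Lambda>) integer_group"
    using pullback(1) by (simp add: rel_subgroup_def R_def)
  show "h (rel_subgroup k \<Lambda> a #>\<^bsub>free_G k \<Lambda>\<^esub> relator k a \<eta> n) = 0" if "\<eta> \<in> \<Lambda>"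
    using pullback(2)[of "relator k a \<eta> n"] that by (auto simp: rel_subgroup_def R_def)
qed

lemma hom_GZ_eq_0_if_coefficients_guessed:
  assumes f: "f \<in> hom (free_G k \<Lambda>) integer_group" and \<eta>: "\<eta> \<in> \<Lambda>"
    and relators_killed: "\<And>n. f (relator k a \<eta> n) = 0"
    and coefficients: "\<And>n. a \<eta> n = 1 - (\<Sum>m\<le>k. f (frag_of (GX (restr \<eta> m n)))) div f (frag_of GZ)"
  shows "f (frag_of GZ) = 0"
proof (rule ccontr)
  define t where "t = f (frag_of GZ)"
  define c where "c n = (\<Sum>m\<le>k. f (frag_of (GX (restr \<eta> m n))))" for n
  define y where "y n = f (frag_of (GY \<eta> n))" for n
  assume "f (frag_of GZ) \<noteq> 0"
  then have "t \<noteq> 0"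
    by (simp add: t_def)
  have recurrence: "fact n * y (Suc n) = y n + (c n mod t + t)" for n
  proof -
    have "0 = fact n * y (Suc n) - y n - (1 - c n div t) * t - c n"
      using hom_relator[OF f \<eta>, of a n] relators_killed[of n] coefficients[of n]
      by (simp add: t_def c_def y_def)
    then have "fact n * y (Suc n) = y n + (c n - c n div t * t) + t"
      by (simp add: algebra_simps)
    then show ?thesis
      by (simp add: minus_div_mult_eq_mod)
  qed
  show False
    using mod_plus_divisor_nonzero_bounded[OF \<open>t \<noteq> 0\<close>] recurrence
    by (rule fact_recurrence_no_int_solution)
qed

definition encode_int_pair :: "int \<times> int \<Rightarrow> nat set" where
  "encode_int_pair p = {to_nat p}"

definition decode_int_pair :: "nat set \<Rightarrow> int \<times> int" where
  "decode_int_pair Q = from_nat (the_elem Q)"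

lemma decode_encode_int_pair [simp]: "decode_int_pair (encode_int_pair p) = p"
  by (simp add: encode_int_pair_def decode_int_pair_def)

theorem claim2p3:
  fixes k :: nat and S :: "nat \<Rightarrow> 'a set" and \<Lambda> :: "(nat \<Rightarrow> 'a) list set"
  assumes "\<Lambda> \<subseteq> seq_prod k S"
    and "\<exists>\<alpha> :: (nat \<Rightarrow> 'a) list \<Rightarrow> nat \<Rightarrow> nat \<Rightarrow> nat set.
           \<forall>h :: nat \<times> nat \<times> (nat \<Rightarrow> 'a) list \<Rightarrow> nat set.
             \<exists>\<eta>\<in>\<Lambda>. \<forall>m\<le>k. \<forall>n. h (restr \<eta> m n) = \<alpha> \<eta> m n"
  shows "\<exists>a :: (nat \<Rightarrow> 'a) list \<Rightarrow> nat \<Rightarrow> int.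
           \<forall>h \<in> hom (G_grp k \<Lambda> a) integer_group. h (G_z k \<Lambda> a) = 0"
proof -
  obtain \<alpha> :: "(nat \<Rightarrow> 'a) list \<Rightarrow> nat \<Rightarrow> nat \<Rightarrow> nat set"
    where \<alpha>: "\<And>h. \<exists>\<eta>\<in>\<Lambda>. \<forall>m\<le>k. \<forall>n. h (restr \<eta> m n) = \<alpha> \<eta> m n"
    using assms(2) by blast
  define a where "a \<eta> n = 1 - (\<Sum>m\<le>k. fst (decode_int_pair (\<alpha> \<eta> m n))) div snd (decode_int_pair (\<alpha> \<eta> 0 0))"
    for \<eta> n
  have "h (G_z k \<Lambda> a) = 0" if h: "h \<in> hom (G_grp k \<Lambda> a) integer_group" for h
  proof -
    define f where "f x = h (rel_subgroup k \<Lambda> a #>\<^bsub>free_G k \<Lambda>\<^esub> x)" for x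
    note f = hom_G_grp_pullback[OF h, folded f_def]
    obtain \<eta> where "\<eta> \<in> \<Lambda>" and guess:
      "\<And>m n. m \<le> k \<Longrightarrow> encode_int_pair (f (frag_of (GX (restr \<eta> m n))), f (frag_of GZ)) = \<alpha> \<eta> m n"
      using \<alpha>[of "\<lambda>\<nu>. encode_int_pair (f (frag_of (GX \<nu>)), f (frag_of GZ))"] by blast
    have "f (frag_of GZ) = 0"
    proof (rule hom_GZ_eq_0_if_coefficients_guessed[OF f(1) \<open>\<eta> \<in> \<Lambda>\<close>])
      show "f (relator k a \<eta> n) = 0" for n
        using f(2)[OF \<open>\<eta> \<in> \<Lambda>\<close>] by (simp add: f_def)
      show "a \<eta> n = 1 - (\<Sum>m\<le>k. f (frag_of (GX (restr \<eta> m n)))) div f (frag_of GZ)" for n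
        by (simp add: a_def flip: guess)
    qed
    then show ?thesis
      by (simp add: f_def G_z_def)
  qed
  then show ?thesis
    by blast
qed

end
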